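(* Let $(\rho_n)$, $(\tau_n)$ be sequences of positive functions on $\mathbb{R}^2$ with $\int_{\mathbb{R}^2}\rho_n dx=a>0$ and $\int_{\mathbb{R}^2}\tau_n dx=b>0$ for all $n$. Suppose $(B_1(\rho_n,\tau_n))$ is bounded. Then for every $\varepsilon>0$ there exists $\xi(\varepsilon)>0$ such that for all $r>\xi$ and all $n\in\mathbb{N}$, $$\sup_{x\in\mathbb{R}^2}\int_{B_r(x)}\rho_n(y)dy\ge a-\varepsilon\quad\text{and}\quad \sup_{x\in\mathbb{R}^2}\int_{B_r(x)}\tau_n(y)dy\ge b-\varepsilon.$$
   Context: $B_1(f,g):=\iint_{\mathbb{R}^2\times\mathbb{R}^2}\log(1+|x-y|)f(x)g(y)\,dx\,dy$ for nonnegative measurable $f,g$; $B_r(x)$ is the ball of radius $r$ centered at $x$. *)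

theory Defs
  imports "HOL-Analysis.Analysis"
begin

definition B1 :: "(real^2 \<Rightarrow> real) \<Rightarrow> (real^2 \<Rightarrow> real) \<Rightarrow> ennreal" where
  "B1 f g = (\<integral>\<^sup>+ x. (\<integral>\<^sup>+ y. ennreal (ln (1 + dist x y) * f x * g y) \<partial>lebesgue) \<partial>lebesgue)"

end

theory Submission imports Defs begin

text \<open>Outside the ball of radius R around x the weight ln(1 + |x - y|) is at least ln(1 + R).
  Hence for every x the mass of g outside that ball is at most the log-moment of g about x divided
  by ln(1 + R), and integrating this against f gives
  (\<integral>f) ((\<integral>g) - sup_x \<integral>_{B_R(x)} g) \<le> B_1(f,g) / ln(1 + R).
  A uniform bound on B_1 and the symmetry of B_1 therefore force both mass sequences to
  concentrate, up to \<epsilon>, in balls whose radius depends only on \<epsilon>.\<close>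

lemma sigma_finite_lebesgue: "sigma_finite_measure (lebesgue :: 'a::euclidean_space measure)"
proof
  show "\<exists>A::'a set set. countable A \<and> A \<subseteq> sets lebesgue \<and> \<Union>A = space lebesgue \<and>
      (\<forall>a\<in>A. emeasure lebesgue a \<noteq> \<infinity>)"
    by (intro exI[of _ "range (\<lambda>n::nat. box (- real n *\<^sub>R One) (real n *\<^sub>R One))"])
       (auto simp: emeasure_lborel_box_eq UN_box_eq_UNIV)
qed

lemma log_kernel_measurable:
  fixes f g :: "'a::euclidean_space \<Rightarrow> real"
  assumes "f \<in> borel_measurable lebesgue" "g \<in> borel_measurable lebesgue"
  shows "(\<lambda>p. ennreal (ln (1 + dist (fst p) (snd p)) * f (fst p) * g (snd p)))
           \<in> borel_measurable (lebesgue \<Otimes>\<^sub>M lebesgue)"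
proof -
  have ident: "(\<lambda>x. x) \<in> measurable lebesgue (borel :: 'a measure)"
    by (rule measurable_completion[OF measurable_ident_sets[OF sets_lborel]])
  note [measurable] =
    measurable_compose[OF measurable_fst ident] measurable_compose[OF measurable_snd ident]
    measurable_compose[OF measurable_fst assms(1)] measurable_compose[OF measurable_snd assms(2)]
  show ?thesis by measurable
qed

lemma B1_commute:
  assumes "f \<in> borel_measurable lebesgue" "g \<in> borel_measurable lebesgue"
  shows "B1 f g = B1 g f"
proof -
  interpret pair_sigma_finite lebesgue lebesgue
    by (simp add: pair_sigma_finite_def sigma_finite_lebesgue)
  show ?thesis
    unfolding B1_def
    using Fubini[OF log_kernel_measurable[OF assms]]
    by (simp add: dist_commute mult.commute mult.left_commute)
qed

lemma le_ball_indicator_plus_log_weight: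
  fixes x y :: "'a::metric_space"
  assumes "c \<ge> 0" "R > 0"
  shows "c \<le> c * indicator (ball x R) y + ln (1 + dist x y) * c / ln (1 + R)"
proof (cases "dist x y < R")
  case True
  then show ?thesis using assms by simp
next
  case False
  then have "ln (1 + R) \<le> ln (1 + dist x y)" using assms(2) by simp
  then have "c * ln (1 + R) \<le> ln (1 + dist x y) * c"
    using assms(1) by (simp add: mult.commute mult_left_mono)
  then show ?thesis using False assms by (simp add: pos_le_divide_eq)
qed

lemma mass_le_ball_mass_plus_log_moment:
  fixes g :: "'a::euclidean_space \<Rightarrow> real"
  assumes g_nonneg: "\<And>y. g y \<ge> 0" and g_int: "integrable lebesgue g" and "R > 0"
  shows "ennreal (\<integral>y. g y \<partial>lebesgue)
    \<le> ennreal (\<integral>y\<in>ball x R. g y \<partial>lebesgue)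
       + ennreal (1 / ln (1 + R)) * (\<integral>\<^sup>+y. ennreal (ln (1 + dist x y) * g y) \<partial>lebesgue)"
proof -
  have [measurable]: "g \<in> borel_measurable lebesgue"
    using g_int by (rule borel_measurable_integrable)
  have [measurable]: "(\<lambda>y. dist x y) \<in> borel_measurable lebesgue"
    by (rule measurable_completion) (simp add: borel_measurable_continuous_onI continuous_on_dist)
  have [measurable]: "ball x R \<in> sets lebesgue"
    by simp
  have ball_int: "integrable lebesgue (\<lambda>y. g y * indicator (ball x R) y)"
    using integrable_mult_indicator[OF _ g_int] by (simp add: mult.commute)
  have "ennreal (\<integral>y. g y \<partial>lebesgue) = (\<integral>\<^sup>+y. ennreal (g y) \<partial>lebesgue)"
    using g_int g_nonneg by (simp add: nn_integral_eq_integral)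
  also have "\<dots> \<le> (\<integral>\<^sup>+y. ennreal (g y * indicator (ball x R) y)
      + ennreal (1 / ln (1 + R)) * ennreal (ln (1 + dist x y) * g y) \<partial>lebesgue)"
  proof (rule nn_integral_mono)
    fix y
    show "ennreal (g y) \<le> ennreal (g y * indicator (ball x R) y)
      + ennreal (1 / ln (1 + R)) * ennreal (ln (1 + dist x y) * g y)"
      using le_ball_indicator_plus_log_weight[OF g_nonneg[of y] \<open>R > 0\<close>, of x y]
        g_nonneg[of y] \<open>R > 0\<close>
      by (simp add: ennreal_mult'[symmetric] ennreal_plus[symmetric] del: ennreal_plus)
  qed
  also have "\<dots> = (\<integral>\<^sup>+y. ennreal (g y * indicator (ball x R) y) \<partial>lebesgue)
      + ennreal (1 / ln (1 + R)) * (\<integral>\<^sup>+y. ennreal (ln (1 + dist x y) * g y) \<partial>lebesgue)"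
    by (subst nn_integral_add) (measurable, simp add: nn_integral_cmult)
  also have "(\<integral>\<^sup>+y. ennreal (g y * indicator (ball x R) y) \<partial>lebesgue)
      = ennreal (\<integral>y\<in>ball x R. g y \<partial>lebesgue)"
    using ball_int g_nonneg
    by (simp add: nn_integral_eq_integral set_lebesgue_integral_def mult.commute)
  finally show ?thesis .
qed

lemma set_integral_ball_le_SUP:
  fixes g :: "'a::euclidean_space \<Rightarrow> real"
  assumes g_nonneg: "\<And>y. g y \<ge> 0" and g_int: "integrable lebesgue g"
  shows "(\<integral>y\<in>ball x R. g y \<partial>lebesgue) \<le> (SUP z. \<integral>y\<in>ball z R. g y \<partial>lebesgue)"
proof (rule cSUP_upper)
  have "(\<integral>y\<in>ball z R. g y \<partial>lebesgue) \<le> (\<integral>y. g y \<partial>lebesgue)" for z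
    unfolding set_lebesgue_integral_def
    using g_nonneg
    by (intro integral_mono integrable_mult_indicator g_int) (auto simp: indicator_def)
  then show "bdd_above (range (\<lambda>z. \<integral>y\<in>ball z R. g y \<partial>lebesgue))"
    by (intro bdd_aboveI2)
qed simp

lemma SUP_set_integral_ball_nonneg:
  fixes g :: "'a::euclidean_space \<Rightarrow> real"
  assumes g_nonneg: "\<And>y. g y \<ge> 0" and g_int: "integrable lebesgue g"
  shows "(SUP z. \<integral>y\<in>ball z R. g y \<partial>lebesgue) \<ge> 0"
proof -
  have "0 \<le> (\<integral>y\<in>ball 0 R. g y \<partial>lebesgue)"
    unfolding set_lebesgue_integral_def using g_nonneg by (simp add: integral_nonneg)
  then show ?thesis
    using set_integral_ball_le_SUP[OF g_nonneg g_int, of 0 R] by linarith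
qed

lemma mass_product_le_concentration_plus_B1:
  fixes f g :: "real^2 \<Rightarrow> real"
  assumes f_nonneg: "\<And>x. f x \<ge> 0" and g_nonneg: "\<And>y. g y \<ge> 0"
    and f_int: "integrable lebesgue f" and g_int: "integrable lebesgue g" and "R > 0"
  shows "ennreal ((\<integral>x. f x \<partial>lebesgue) * (\<integral>y. g y \<partial>lebesgue))
    \<le> ennreal ((\<integral>x. f x \<partial>lebesgue) * (SUP x. \<integral>y\<in>ball x R. g y \<partial>lebesgue))
       + ennreal (1 / ln (1 + R)) * B1 f g"
proof -
  define S where "S = (SUP x. \<integral>y\<in>ball x R. g y \<partial>lebesgue)"
  define c where "c = ennreal (1 / ln (1 + R))"
  have f_meas [measurable]: "f \<in> borel_measurable lebesgue"
    using f_int by (rule borel_measurable_integrable)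
  have g_meas: "g \<in> borel_measurable lebesgue"
    using g_int by (rule borel_measurable_integrable)
  have [measurable]: "(\<lambda>x. \<integral>\<^sup>+y. ennreal (ln (1 + dist x y) * f x * g y) \<partial>lebesgue)
      \<in> borel_measurable lebesgue"
    using sigma_finite_measure.borel_measurable_nn_integral_fst[OF sigma_finite_lebesgue
        log_kernel_measurable[OF f_meas g_meas]]
    by simp
  have log_moment_meas: "(\<lambda>y. ennreal (ln (1 + dist x y) * g y)) \<in> borel_measurable lebesgue" for x
    using measurable_compose_Pair1[OF _ log_kernel_measurable[OF measurable_const[of 1] g_meas], of x]
    by simp
  have S_nonneg: "S \<ge> 0"
    unfolding S_def by (rule SUP_set_integral_ball_nonneg[OF g_nonneg g_int])
  have pointwise: "ennreal (f x) * ennreal (\<integral>y. g y \<partial>lebesgue)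
      \<le> ennreal (f x * S) + c * (\<integral>\<^sup>+y. ennreal (ln (1 + dist x y) * f x * g y) \<partial>lebesgue)" for x
  proof -
    have "ennreal (\<integral>y\<in>ball x R. g y \<partial>lebesgue) \<le> ennreal S"
      unfolding S_def by (rule ennreal_leI) (rule set_integral_ball_le_SUP[OF g_nonneg g_int])
    then have "ennreal (\<integral>y. g y \<partial>lebesgue)
        \<le> ennreal S + c * (\<integral>\<^sup>+y. ennreal (ln (1 + dist x y) * g y) \<partial>lebesgue)"
      unfolding c_def
      by (rule order_trans[OF mass_le_ball_mass_plus_log_moment[OF g_nonneg g_int \<open>R > 0\<close>]
            add_right_mono])
    then have "ennreal (f x) * ennreal (\<integral>y. g y \<partial>lebesgue)
        \<le> ennreal (f x) * (ennreal S + c * (\<integral>\<^sup>+y. ennreal (ln (1 + dist x y) * g y) \<partial>lebesgue))"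
      by (rule mult_left_mono) simp
    also have "\<dots> = ennreal (f x * S)
        + c * (ennreal (f x) * (\<integral>\<^sup>+y. ennreal (ln (1 + dist x y) * g y) \<partial>lebesgue))"
      using f_nonneg S_nonneg by (simp add: distrib_left ennreal_mult' mult.left_commute)
    also have "ennreal (f x) * (\<integral>\<^sup>+y. ennreal (ln (1 + dist x y) * g y) \<partial>lebesgue)
        = (\<integral>\<^sup>+y. ennreal (ln (1 + dist x y) * f x * g y) \<partial>lebesgue)"
      unfolding nn_integral_cmult[OF log_moment_meas, symmetric]
      by (intro nn_integral_cong) (simp add: ennreal_mult'[symmetric] f_nonneg mult_ac)
    finally show ?thesis .
  qed
  have "ennreal ((\<integral>x. f x \<partial>lebesgue) * (\<integral>y. g y \<partial>lebesgue))
      = (\<integral>\<^sup>+x. ennreal (f x) * ennreal (\<integral>y. g y \<partial>lebesgue) \<partial>lebesgue)"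
    using f_int f_nonneg
    by (simp add: nn_integral_multc nn_integral_eq_integral ennreal_mult' integral_nonneg)
  also have "\<dots> \<le> (\<integral>\<^sup>+x. ennreal (f x * S)
      + c * (\<integral>\<^sup>+y. ennreal (ln (1 + dist x y) * f x * g y) \<partial>lebesgue) \<partial>lebesgue)"
    by (rule nn_integral_mono) (rule pointwise)
  also have "\<dots> = ennreal ((\<integral>x. f x \<partial>lebesgue) * S) + c * B1 f g"
    using f_int f_nonneg S_nonneg unfolding B1_def
    by (subst nn_integral_add)
       (measurable, simp add: nn_integral_cmult nn_integral_eq_integral)
  finally show ?thesis
    unfolding S_def c_def .
qed

lemma SUP_set_integral_ball_ge_mass_minus:
  fixes f g :: "real^2 \<Rightarrow> real"
  assumes f_nonneg: "\<And>x. f x \<ge> 0" and g_nonneg: "\<And>y. g y \<ge> 0"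
    and f_int: "integrable lebesgue f" and g_int: "integrable lebesgue g"
    and f_mass_pos: "(\<integral>x. f x \<partial>lebesgue) > 0"
    and B1_le: "B1 f g \<le> ennreal C" and "C \<ge> 0" and "\<epsilon> > 0"
    and r_large: "r > exp (C / (\<epsilon> * (\<integral>x. f x \<partial>lebesgue)))"
  shows "(SUP x. \<integral>y\<in>ball x r. g y \<partial>lebesgue) \<ge> (\<integral>y. g y \<partial>lebesgue) - \<epsilon>"
proof -
  define A where "A = (\<integral>x. f x \<partial>lebesgue)"
  define S where "S = (SUP x. \<integral>y\<in>ball x r. g y \<partial>lebesgue)"
  define L where "L = ln (1 + r)"
  have "r > 0"
    using r_large exp_gt_zero by (meson order.strict_trans)
  then have "L > 0"
    unfolding L_def by simp
  have "C / (\<epsilon> * A) = ln (exp (C / (\<epsilon> * A)))"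
    by simp
  also have "\<dots> < ln r"
    using ln_less_cancel_iff[OF exp_gt_zero \<open>r > 0\<close>] r_large unfolding A_def by blast
  also have "\<dots> < L"
    unfolding L_def using \<open>r > 0\<close> by simp
  finally have "C / L < \<epsilon> * A"
    using \<open>L > 0\<close> \<open>\<epsilon> > 0\<close> f_mass_pos unfolding A_def by (simp add: field_simps)
  have S_nonneg: "S \<ge> 0"
    unfolding S_def by (rule SUP_set_integral_ball_nonneg[OF g_nonneg g_int])
  have "ennreal (A * (\<integral>y. g y \<partial>lebesgue)) \<le> ennreal (A * S) + ennreal (1 / L) * ennreal C"
    using mass_product_le_concentration_plus_B1[OF f_nonneg g_nonneg f_int g_int \<open>r > 0\<close>]
      B1_le unfolding A_def S_def L_def
    by (meson add_left_mono mult_left_mono order_trans zero_le)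
  also have "\<dots> = ennreal (A * S + C / L)"
    using f_mass_pos S_nonneg \<open>C \<ge> 0\<close> \<open>L > 0\<close> unfolding A_def
    by (simp add: ennreal_mult'[symmetric] ennreal_plus[symmetric] del: ennreal_plus)
  finally have "A * (\<integral>y. g y \<partial>lebesgue) \<le> A * S + C / L"
    using f_mass_pos S_nonneg \<open>C \<ge> 0\<close> \<open>L > 0\<close> unfolding A_def
    by (subst (asm) ennreal_le_iff) (auto intro: add_nonneg_nonneg)
  with \<open>C / L < \<epsilon> * A\<close> have "A * (\<integral>y. g y \<partial>lebesgue) < A * (S + \<epsilon>)"
    by (simp add: distrib_left mult.commute)
  then show ?thesis
    using f_mass_pos unfolding A_def S_def by (simp add: mult_less_cancel_left_pos)
qed

theorem lemma3p2:
  fixes \<rho> \<tau> :: "nat \<Rightarrow> real^2 \<Rightarrow> real" and a b :: real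
  assumes a_pos: "a > 0" and b_pos: "b > 0"
    and rho_pos: "\<And>n x. \<rho> n x > 0" and tau_pos: "\<And>n x. \<tau> n x > 0"
    and rho_int: "\<And>n. integrable lebesgue (\<rho> n)"
    and tau_int: "\<And>n. integrable lebesgue (\<tau> n)"
    and rho_mass: "\<And>n. (\<integral>x. \<rho> n x \<partial>lebesgue) = a"
    and tau_mass: "\<And>n. (\<integral>x. \<tau> n x \<partial>lebesgue) = b"
    and bounded: "\<exists>C::real. \<forall>n. B1 (\<rho> n) (\<tau> n) \<le> ennreal C"
  shows "\<forall>\<epsilon>>0. \<exists>\<xi>>0. \<forall>r>\<xi>. \<forall>n.
           (SUP x. (\<integral>y\<in>ball x r. \<rho> n y \<partial>lebesgue)) \<ge> a - \<epsilon> \<and>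
           (SUP x. (\<integral>y\<in>ball x r. \<tau> n y \<partial>lebesgue)) \<ge> b - \<epsilon>"
proof (intro allI impI)
  fix \<epsilon> :: real
  assume "\<epsilon> > 0"
  obtain C0 where C0: "\<And>n. B1 (\<rho> n) (\<tau> n) \<le> ennreal C0"
    using bounded by blast
  define C where "C = max C0 0"
  have B1_le: "B1 (\<rho> n) (\<tau> n) \<le> ennreal C" for n
    unfolding C_def by (rule order_trans[OF C0]) (simp add: ennreal_leI)
  have B1_le_swapped: "B1 (\<tau> n) (\<rho> n) \<le> ennreal C" for n
    using B1_le[of n] B1_commute[OF borel_measurable_integrable borel_measurable_integrable]
      rho_int tau_int by metis
  note rho_nonneg = less_imp_le[OF rho_pos] and tau_nonneg = less_imp_le[OF tau_pos]
  show "\<exists>\<xi>>0. \<forall>r>\<xi>. \<forall>n.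
      (SUP x. (\<integral>y\<in>ball x r. \<rho> n y \<partial>lebesgue)) \<ge> a - \<epsilon> \<and>
      (SUP x. (\<integral>y\<in>ball x r. \<tau> n y \<partial>lebesgue)) \<ge> b - \<epsilon>"
  proof (intro exI[of _ "max (exp (C / (\<epsilon> * a))) (exp (C / (\<epsilon> * b)))"] conjI allI impI)
    fix r :: real and n :: nat
    assume "r > max (exp (C / (\<epsilon> * a))) (exp (C / (\<epsilon> * b)))"
    then show "(SUP x. (\<integral>y\<in>ball x r. \<tau> n y \<partial>lebesgue)) \<ge> b - \<epsilon>"
      and "(SUP x. (\<integral>y\<in>ball x r. \<rho> n y \<partial>lebesgue)) \<ge> a - \<epsilon>"
      using SUP_set_integral_ball_ge_mass_minus[OF rho_nonneg tau_nonneg rho_int tau_int _ B1_le]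
        SUP_set_integral_ball_ge_mass_minus[OF tau_nonneg rho_nonneg tau_int rho_int _ B1_le_swapped]
        rho_mass tau_mass a_pos b_pos \<open>\<epsilon> > 0\<close>
      by (auto simp: C_def)
  qed (simp add: less_max_iff_disj)
qed

end
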